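(* For every $n\ge1$, $\alpha_{\mathrm{od}}(P_n)=\lceil n/3\rceil$, and for every $n\ge3$, $\alpha_{\mathrm{od}}(C_n)=\lceil(n-2)/3\rceil$.
   Context: $P_n$ is the path on $n$ vertices and $C_n$ the cycle on $n$ vertices. An odd independent set in $G=(V,E)$ is an independent set $S$ such that every $v\in V\setminus S$ has either no neighbor or an odd number of neighbors in $S$; $\alpha_{\mathrm{od}}(G)$ is its maximum size. *)

theory Defs
  imports Complex_Main
begin

text \<open>A finite simple graph is given by a vertex set V and a set E of 2-element
  subsets of V (its edges).\<close>

definition nbrs :: "'a set set \<Rightarrow> 'a \<Rightarrow> 'a set" where
  "nbrs E v = {u. {u, v} \<in> E}"

definition independent :: "'a set \<times> 'a set set \<Rightarrow> 'a set \<Rightarrow> bool" where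
  "independent G S \<longleftrightarrow> S \<subseteq> fst G \<and> (\<forall>u\<in>S. \<forall>v\<in>S. {u, v} \<notin> snd G)"

definition odd_independent :: "'a set \<times> 'a set set \<Rightarrow> 'a set \<Rightarrow> bool" where
  "odd_independent G S \<longleftrightarrow> independent G S \<and>
     (\<forall>v \<in> fst G - S. nbrs (snd G) v \<inter> S = {} \<or> odd (card (nbrs (snd G) v \<inter> S)))"

definition alpha_od :: "'a set \<times> 'a set set \<Rightarrow> nat" where
  "alpha_od G = Max {card S | S. odd_independent G S}"

definition path_graph :: "nat \<Rightarrow> nat set \<times> nat set set" where
  "path_graph n = ({0..<n}, {{i, i + 1} | i. i + 1 < n})"

definition cycle_graph :: "nat \<Rightarrow> nat set \<times> nat set set" where
  "cycle_graph n = ({0..<n}, {{i, (i + 1) mod n} | i. i < n})"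

end

theory Submission
  imports Defs
begin

text \<open>An odd independent set S never contains two adjacent vertices, nor both neighbours
  of a vertex of degree two: that vertex lies outside S and has exactly two neighbours in S.
  In P_n and C_n every vertex has degree at most two, so any two elements of S are
  at distance at least 3 (along the path, resp. around the cycle), and a set of integers
  with pairwise gaps at least 3 inside an interval of length L has at most \<lceil>L/3\<rceil>
  elements. For C_n, S lies in the arc of n - 2 vertices starting at its least element,
  giving \<lfloor>n/3\<rfloor> = \<lceil>(n-2)/3\<rceil>. The multiples of 3 below n,
  resp. below n - 2, attain these bounds, since every other vertex has at most one
  neighbour among them.\<close>

lemma less_ceiling_div_iff:
  fixes j k d :: nat
  assumes "0 < d"
  shows "j < (k + d - 1) div d \<longleftrightarrow> d * j < k"
  using assms by (auto simp: Suc_le_eq[symmetric] less_eq_div_iff_mult_less_eq algebra_simps)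

definition spaced :: "nat \<Rightarrow> nat set \<Rightarrow> bool" where
  "spaced d S \<longleftrightarrow> (\<forall>x\<in>S. \<forall>y\<in>S. x < y \<longrightarrow> x + d \<le> y)"

lemma card_le_if_spaced:
  assumes sub: "S \<subseteq> {a..<a + L}" and sp: "spaced d S" and d: "0 < d"
  shows "card S \<le> (L + d - 1) div d"
proof -
  let ?block = "\<lambda>x. (x - a) div d"
  have "inj_on ?block S"
  proof (rule linorder_inj_onI')
    fix x y assume "x < y" "x \<in> S" "y \<in> S"
    then have "(x - a) + d \<le> y - a" using sp sub unfolding spaced_def by fastforce
    then have "(x - a) div d < (y - a) div d"
      using div_le_mono[of "(x - a) + d" "y - a" d] d by simp
    then show "?block x \<noteq> ?block y" by simp
  qed
  moreover have "?block ` S \<subseteq> {..<(L + d - 1) div d}"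
  proof
    fix q assume "q \<in> ?block ` S"
    then obtain x where x: "x \<in> S" "q = (x - a) div d" by blast
    moreover have "x - a < L" using subsetD[OF sub x(1)] by auto
    ultimately have "d * q < L" using times_div_less_eq_dividend le_less_trans by blast
    then show "q \<in> {..<(L + d - 1) div d}" using less_ceiling_div_iff[OF d] by simp
  qed
  ultimately show ?thesis by (metis card_inj_on_le card_lessThan finite_lessThan)
qed

lemma card_multiples_below:
  fixes d k :: nat
  assumes "0 < d"
  shows "card {i. i < k \<and> d dvd i} = (k + d - 1) div d"
proof -
  have "{i. i < k \<and> d dvd i} = (\<lambda>j. d * j) ` {..<(k + d - 1) div d}"
    using less_ceiling_div_iff[OF assms] by (auto elim!: dvdE)
  then show ?thesis using assms by (simp add: card_image inj_on_def)
qed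

lemma alpha_od_eqI:
  assumes "\<And>S. odd_independent G S \<Longrightarrow> card S \<le> k" and "odd_independent G S\<^sub>0" and "card S\<^sub>0 = k"
  shows "alpha_od G = k"
  unfolding alpha_od_def
proof (rule Max_eqI)
  show "finite {card S |S. odd_independent G S}"
    by (rule finite_subset[of _ "{..k}"]) (use assms(1) in auto)
qed (use assms in auto)

lemma odd_independent_subset_vertices: "odd_independent G S \<Longrightarrow> S \<subseteq> fst G"
  unfolding odd_independent_def independent_def by blast

definition conflicting :: "'a set \<times> 'a set set \<Rightarrow> 'a \<Rightarrow> 'a \<Rightarrow> bool" where
  "conflicting G x y \<longleftrightarrow> {x, y} \<in> snd G \<or> (\<exists>v\<in>fst G. nbrs (snd G) v = {x, y})"

lemma odd_independent_not_conflicting: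
  assumes S: "odd_independent G S" and "x \<in> S" "y \<in> S" "x \<noteq> y"
  shows "\<not> conflicting G x y"
proof
  assume "conflicting G x y"
  moreover have "{x, y} \<notin> snd G" using S \<open>x \<in> S\<close> \<open>y \<in> S\<close>
    unfolding odd_independent_def independent_def by blast
  ultimately obtain v where v: "v \<in> fst G" "nbrs (snd G) v = {x, y}"
    unfolding conflicting_def by blast
  then have "{x, v} \<in> snd G" by (auto simp: nbrs_def insert_commute)
  then have "v \<notin> S" using S \<open>x \<in> S\<close> unfolding odd_independent_def independent_def by blast
  then have "nbrs (snd G) v \<inter> S = {} \<or> odd (card (nbrs (snd G) v \<inter> S))"
    using S v(1) unfolding odd_independent_def by blast
  moreover have "nbrs (snd G) v \<inter> S = {x, y}" using v(2) \<open>x \<in> S\<close> \<open>y \<in> S\<close> by blast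
  ultimately show False using \<open>x \<noteq> y\<close> by simp
qed

lemma odd_independentI_unique_nbr:
  assumes "independent G S"
    and "\<And>v x y. v \<in> fst G - S \<Longrightarrow> x \<in> S \<Longrightarrow> y \<in> S \<Longrightarrow> {x, v} \<in> snd G \<Longrightarrow> {y, v} \<in> snd G \<Longrightarrow> x = y"
  shows "odd_independent G S"
  unfolding odd_independent_def
proof (intro conjI assms(1) ballI)
  fix v assume v: "v \<in> fst G - S"
  show "nbrs (snd G) v \<inter> S = {} \<or> odd (card (nbrs (snd G) v \<inter> S))"
  proof (cases "nbrs (snd G) v \<inter> S = {}")
    case False
    then obtain x where x: "x \<in> nbrs (snd G) v \<inter> S" by blast
    then have "nbrs (snd G) v \<inter> S = {x}" using assms(2)[OF v] by (auto simp: nbrs_def)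
    then show ?thesis by simp
  qed simp
qed

lemma fst_path_graph [simp]: "fst (path_graph n) = {0..<n}"
  by (simp add: path_graph_def)

lemma path_graph_edge_iff:
  "{u, v} \<in> snd (path_graph n) \<longleftrightarrow> (u + 1 = v \<or> v + 1 = u) \<and> u < n \<and> v < n"
  unfolding path_graph_def by (auto simp: doubleton_eq_iff)

lemma path_graph_edges: "snd (path_graph n) = (\<lambda>i. {i, i + 1}) ` {..<n - 1}"
proof -
  have "{i. i + 1 < n} = {..<n - 1}" by auto
  then show ?thesis unfolding path_graph_def by (auto simp only: Setcompr_eq_image snd_conv)
qed

lemma path_graph_conflicting:
  assumes "x < y" "y < x + 3" "y < n"
  shows "conflicting (path_graph n) x y"
proof (cases "y = x + 1")
  case True
  then show ?thesis using assms by (simp add: conflicting_def path_graph_edge_iff)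
next
  case False
  then have "y = x + 2" using assms by linarith
  then have "nbrs (snd (path_graph n)) (x + 1) = {x, y}"
    using assms by (auto simp: nbrs_def path_graph_edge_iff)
  moreover have "x + 1 \<in> fst (path_graph n)" using assms by simp
  ultimately show ?thesis unfolding conflicting_def by blast
qed

lemma odd_independent_path_graph_spaced:
  assumes "odd_independent (path_graph n) S"
  shows "spaced 3 S"
  unfolding spaced_def
proof (intro ballI impI)
  fix x y assume "x \<in> S" "y \<in> S" "x < y"
  moreover have "y < n" using odd_independent_subset_vertices[OF assms] \<open>y \<in> S\<close> by auto
  ultimately show "x + 3 \<le> y"
    using odd_independent_not_conflicting[OF assms] path_graph_conflicting
    by (metis less_irrefl not_le)
qed

lemma odd_independent_path_graph_multiples:
  "odd_independent (path_graph n) {i. i < n \<and> 3 dvd i}"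
proof (rule odd_independentI_unique_nbr)
  show "independent (path_graph n) {i. i < n \<and> 3 dvd i}"
    unfolding independent_def by (auto simp: path_graph_edge_iff; presburger)
qed (auto simp: path_graph_edge_iff; presburger)

lemma alpha_od_path_graph: "alpha_od (path_graph n) = (n + 2) div 3"
proof (rule alpha_od_eqI)
  fix S assume S: "odd_independent (path_graph n) S"
  have "S \<subseteq> {0..<0 + n}" using odd_independent_subset_vertices[OF S] by simp
  from card_le_if_spaced[OF this odd_independent_path_graph_spaced[OF S]]
  show "card S \<le> (n + 2) div 3" by simp
qed (use odd_independent_path_graph_multiples card_multiples_below[of 3 n] in auto)

lemma cycle_graph_edges:
  assumes "0 < n"
  shows "snd (cycle_graph n) = insert {n - 1, 0} (snd (path_graph n))"
proof -
  have "snd (cycle_graph n) = (\<lambda>i. {i, (i + 1) mod n}) ` {..<n}"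
    unfolding cycle_graph_def lessThan_def by (auto simp only: Setcompr_eq_image snd_conv)
  also have "{..<n} = insert (n - 1) {..<n - 1}" using assms by auto
  also have "(\<lambda>i. {i, (i + 1) mod n}) ` insert (n - 1) {..<n - 1}
      = insert {n - 1, 0} ((\<lambda>i. {i, i + 1}) ` {..<n - 1})"
  proof -
    have "(\<lambda>i. {i, (i + 1) mod n}) ` {..<n - 1} = (\<lambda>i. {i, i + 1}) ` {..<n - 1}"
      by (rule image_cong) auto
    then show ?thesis using assms by simp
  qed
  finally show ?thesis by (simp add: path_graph_edges)
qed

lemma fst_cycle_graph [simp]: "fst (cycle_graph n) = {0..<n}"
  by (simp add: cycle_graph_def)

lemma cycle_graph_edge_iff:
  assumes "0 < n"
  shows "{u, v} \<in> snd (cycle_graph n) \<longleftrightarrow>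
    (u + 1 = v \<or> v + 1 = u) \<and> u < n \<and> v < n \<or> u = n - 1 \<and> v = 0 \<or> u = 0 \<and> v = n - 1"
  by (auto simp: cycle_graph_edges[OF assms] path_graph_edge_iff doubleton_eq_iff)

lemma cycle_graph_conflicting:
  assumes n: "3 \<le> n" and "x < y" "y < n" and close: "y < x + 3 \<or> x + n < y + 3"
  shows "conflicting (cycle_graph n) x y"
proof -
  have nbrs_eq: "conflicting (cycle_graph n) x y"
    if "v < n" "nbrs (snd (cycle_graph n)) v = {x, y}" for v
    using that unfolding conflicting_def by auto
  have edge: "conflicting (cycle_graph n) x y" if "{x, y} \<in> snd (cycle_graph n)"
    using that unfolding conflicting_def by blast
  from close consider "y = x + 1" | "y = x + 2" | "x = 0" "y = n - 1" | "x = 0" "y = n - 2" | "x = 1" "y = n - 1"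
    using assms by linarith
  then show ?thesis
  proof cases
    case 1
    then show ?thesis using assms by (intro edge) (simp add: cycle_graph_edge_iff)
  next
    case 2
    then show ?thesis using assms
      by (intro nbrs_eq[of "x + 1"]) (auto simp: nbrs_def cycle_graph_edge_iff)
  next
    case 3
    then show ?thesis using assms by (intro edge) (simp add: cycle_graph_edge_iff)
  next
    case 4
    then show ?thesis using assms
      by (intro nbrs_eq[of "n - 1"]) (auto simp: nbrs_def cycle_graph_edge_iff)
  next
    case 5
    then show ?thesis using assms
      by (intro nbrs_eq[of 0]) (auto simp: nbrs_def cycle_graph_edge_iff)
  qed
qed

lemma odd_independent_cycle_graph_gaps:
  assumes n: "3 \<le> n" and S: "odd_independent (cycle_graph n) S"
    and "x \<in> S" "y \<in> S" "x < y"
  shows "x + 3 \<le> y \<and> y + 3 \<le> x + n"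
proof -
  have "y < n" using odd_independent_subset_vertices[OF S] \<open>y \<in> S\<close> by auto
  then show ?thesis
    using odd_independent_not_conflicting[OF S \<open>x \<in> S\<close> \<open>y \<in> S\<close>]
      cycle_graph_conflicting[OF n \<open>x < y\<close>] \<open>x < y\<close>
    by (metis less_irrefl not_le)
qed

lemma card_le_of_odd_independent_cycle_graph:
  assumes n: "3 \<le> n" and S: "odd_independent (cycle_graph n) S"
  shows "card S \<le> n div 3"
proof (cases "S = {}")
  case False
  have "finite S" using finite_subset[OF odd_independent_subset_vertices[OF S]] by simp
  define m where "m = Min S"
  have "S \<subseteq> {m..<m + (n - 2)}"
  proof
    fix y assume "y \<in> S"
    then have "m \<le> y" using \<open>finite S\<close> by (simp add: m_def)
    moreover have "m \<in> S" using \<open>finite S\<close> False by (simp add: m_def)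
    ultimately show "y \<in> {m..<m + (n - 2)}"
      using odd_independent_cycle_graph_gaps[OF n S, of m y] \<open>y \<in> S\<close> n
      by (cases "m = y") auto
  qed
  moreover have "spaced 3 S"
    unfolding spaced_def using odd_independent_cycle_graph_gaps[OF n S] by blast
  ultimately have "card S \<le> (n - 2 + 3 - 1) div 3" by (rule card_le_if_spaced) simp
  then show ?thesis using n by simp
qed simp

lemma odd_independent_cycle_graph_multiples:
  assumes "3 \<le> n"
  shows "odd_independent (cycle_graph n) {i. i < n - 2 \<and> 3 dvd i}"
proof (rule odd_independentI_unique_nbr)
  show "independent (cycle_graph n) {i. i < n - 2 \<and> 3 dvd i}"
    unfolding independent_def using assms by (auto simp: cycle_graph_edge_iff; presburger)
qed (use assms in \<open>auto simp: cycle_graph_edge_iff; presburger\<close>)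

lemma alpha_od_cycle_graph:
  assumes "3 \<le> n"
  shows "alpha_od (cycle_graph n) = n div 3"
proof (rule alpha_od_eqI)
  show "card {i. i < n - 2 \<and> 3 dvd i} = n div 3"
    using card_multiples_below[of 3 "n - 2"] assms by simp
qed (use assms card_le_of_odd_independent_cycle_graph odd_independent_cycle_graph_multiples in auto)

lemma nat_ceiling_third: "nat \<lceil>real n / 3\<rceil> = (n + 2) div 3"
proof -
  have "\<lceil>real n / 3\<rceil> = int ((n + 2) div 3)"
    by (auto simp: ceiling_eq_iff field_simps; linarith)
  then show ?thesis by simp
qed

lemma nat_ceiling_third_minus_2: "nat \<lceil>(real n - 2) / 3\<rceil> = n div 3"
proof -
  have "\<lceil>(real n - 2) / 3\<rceil> = int (n div 3)"
    by (auto simp: ceiling_eq_iff field_simps; linarith)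
  then show ?thesis by simp
qed

theorem proposition7:
  shows "(\<forall>n::nat. n \<ge> 1 \<longrightarrow> alpha_od (path_graph n) = nat \<lceil>real n / 3\<rceil>) \<and>
         (\<forall>n::nat. n \<ge> 3 \<longrightarrow> alpha_od (cycle_graph n) = nat \<lceil>(real n - 2) / 3\<rceil>)"
  by (simp add: alpha_od_path_graph alpha_od_cycle_graph nat_ceiling_third nat_ceiling_third_minus_2)

end
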